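(* Let $\rho\in\mathcal{D}(\mathcal{H})$ be a fixed density matrix. Then the function $\sigma\mapsto S(\rho\,\|\,\sigma)$ is $\lambda_{\max}(\rho)$-smooth and $\lambda_{\min}(\rho)$-strongly convex relative to the negative log determinant $\sigma\mapsto-\log\det(\sigma)$ on $\mathcal{D}(\mathcal{H})$.
   Context: $\mathcal{D}(\mathcal{H})$ is the set of positive semidefinite unit-trace Hermitian operators on $\mathcal{H}\cong\mathbb{C}^n$; $S(\rho\|\sigma)=\operatorname{tr}[\rho(\log\rho-\log\sigma)]$ is the quantum relative entropy. A function $g$ is $L$-smooth (resp. $\mu$-strongly convex) relative to $\varphi$ on $\mathcal{C}$ if $L\varphi-g$ (resp. $g-\mu\varphi$) is convex on the relative interior of $\mathcal{C}$ (here, the positive definite density matrices). *)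

theory Defs
  imports "HOL-Analysis.Analysis"
begin

text \<open>Complex n x n matrices are modelled as complex^'n^'n for a finite index type 'n
  (so H = C^n with n = CARD('n)).\<close>

definition cadj :: "complex^'n^'n \<Rightarrow> complex^'n^'n" where
  "cadj A = (\<chi> i j. cnj (A $ j $ i))"

definition hermitian :: "complex^'n^'n \<Rightarrow> bool" where
  "hermitian A \<longleftrightarrow> cadj A = A"

definition unitary :: "complex^'n^'n \<Rightarrow> bool" where
  "unitary U \<longleftrightarrow> cadj U ** U = mat 1"

definition cquad :: "complex^'n^'n \<Rightarrow> complex^'n \<Rightarrow> complex" where
  "cquad A v = (\<Sum>i\<in>UNIV. cnj (v $ i) * (A *v v) $ i)"

definition psd :: "complex^'n^'n \<Rightarrow> bool" where
  "psd A \<longleftrightarrow> hermitian A \<and> (\<forall>v. cquad A v \<in> \<real> \<and> Re (cquad A v) \<ge> 0)"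

definition posdef :: "complex^'n^'n \<Rightarrow> bool" where
  "posdef A \<longleftrightarrow> hermitian A \<and> (\<forall>v. v \<noteq> 0 \<longrightarrow> cquad A v \<in> \<real> \<and> Re (cquad A v) > 0)"

definition density :: "complex^'n^'n \<Rightarrow> bool" where
  "density A \<longleftrightarrow> psd A \<and> trace A = 1"

text \<open>Relative interior of D(H): positive definite density matrices.\<close>
definition density_pd :: "(complex^'n^'n) set" where
  "density_pd = {A. posdef A \<and> trace A = 1}"

definition cdiag :: "('n \<Rightarrow> real) \<Rightarrow> complex^'n^'n" where
  "cdiag d = (\<chi> i j. if i = j then complex_of_real (d i) else 0)"

text \<open>Matrix logarithm of a positive semidefinite matrix via the spectral decomposition
  A = U diag(d) U*, taking log on the support (log of zero eigenvalues set to 0, i.e.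
  the usual convention 0 log 0 = 0 in tr[rho log rho]).\<close>
definition mlog :: "complex^'n^'n \<Rightarrow> complex^'n^'n" where
  "mlog A = (SOME L. \<exists>U d. unitary U \<and> (\<forall>i. d i \<ge> 0) \<and> A = U ** cdiag d ** cadj U \<and>
       L = U ** cdiag (\<lambda>i. if d i > 0 then ln (d i) else 0) ** cadj U)"

definition qrel_entropy :: "complex^'n^'n \<Rightarrow> complex^'n^'n \<Rightarrow> real" where
  "qrel_entropy \<rho> \<sigma> = Re (trace (\<rho> ** (mlog \<rho> - mlog \<sigma>)))"

text \<open>Real eigenvalues (Hermitian matrices have only real eigenvalues).\<close>
definition real_eigenvalues :: "complex^'n^'n \<Rightarrow> real set" where
  "real_eigenvalues A = {r. \<exists>v. v \<noteq> 0 \<and> A *v v = complex_of_real r *s v}"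

definition lambda_max :: "complex^'n^'n \<Rightarrow> real" where
  "lambda_max A = Max (real_eigenvalues A)"

definition lambda_min :: "complex^'n^'n \<Rightarrow> real" where
  "lambda_min A = Min (real_eigenvalues A)"

definition neg_logdet :: "complex^'n^'n \<Rightarrow> real" where
  "neg_logdet \<sigma> = - ln (Re (det \<sigma>))"

definition rel_smooth :: "(complex^'n^'n) set \<Rightarrow> real \<Rightarrow> (complex^'n^'n \<Rightarrow> real) \<Rightarrow> (complex^'n^'n \<Rightarrow> real) \<Rightarrow> bool" where
  "rel_smooth C L g \<phi> \<longleftrightarrow> convex_on C (\<lambda>x. L * \<phi> x - g x)"

definition rel_strongly_convex :: "(complex^'n^'n) set \<Rightarrow> real \<Rightarrow> (complex^'n^'n \<Rightarrow> real) \<Rightarrow> (complex^'n^'n \<Rightarrow> real) \<Rightarrow> bool" where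
  "rel_strongly_convex C \<mu> g \<phi> \<longleftrightarrow> convex_on C (\<lambda>x. g x - \<mu> * \<phi> x)"

end

theory Submission
  imports Defs "HOL-Real_Asymp.Real_Asymp"
begin

text \<open>On positive definite \<open>\<sigma>\<close> we have \<open>-log det \<sigma> = -tr (log \<sigma>)\<close>, so
  \<open>c (-log det \<sigma>) - S(\<rho>\<parallel>\<sigma>)\<close> and \<open>S(\<rho>\<parallel>\<sigma>) - c (-log det \<sigma>)\<close> are, up to constants,
  \<open>-tr (Q log \<sigma>)\<close> with \<open>Q = c I - \<rho>\<close> resp. \<open>Q = \<rho> - c I\<close>. For \<open>c = \<lambda>\<^sub>m\<^sub>a\<^sub>x(\<rho>)\<close>
  resp. \<open>c = \<lambda>\<^sub>m\<^sub>i\<^sub>n(\<rho>)\<close> the weight \<open>Q\<close> is positive semidefinite, and \<open>\<sigma> \<mapsto> tr (Q log \<sigma>)\<close>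
  is concave for every such \<open>Q\<close>: by the integral representation
  \<open>log \<sigma> = \<integral>\<^sub>0\<^sup>\<infinity> ((1 + s)\<^sup>-\<^sup>1 I - (\<sigma> + s I)\<^sup>-\<^sup>1) ds\<close> this reduces to the convexity of
  \<open>\<sigma> \<mapsto> x\<^sup>* \<sigma>\<^sup>-\<^sup>1 x\<close>, a pointwise supremum of functions affine in \<open>\<sigma>\<close>.
  All matrix functions are evaluated through spectral decompositions; the spectral theorem for
  Hermitian matrices is obtained by maximising the Rayleigh quotient on orthogonal complements.\<close>

section \<open>Hermitian inner product and adjoints\<close>

definition cinner :: "complex^'n \<Rightarrow> complex^'n \<Rightarrow> complex" where
  "cinner x y = (\<Sum>i\<in>UNIV. cnj (x$i) * y$i)"

lemma cquad_cinner: "cquad A v = cinner v (A *v v)"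
  by (simp add: cquad_def cinner_def)

lemma cinner_commute: "cinner y x = cnj (cinner x y)"
  by (simp add: cinner_def mult.commute)

lemma cinner_add_right: "cinner x (y + z) = cinner x y + cinner x z"
  by (simp add: cinner_def distrib_left sum.distrib)

lemma cinner_diff_right: "cinner x (y - z) = cinner x y - cinner x z"
  by (simp add: cinner_def right_diff_distrib sum_subtractf)

lemma cinner_scale_right: "cinner x (c *s y) = c * cinner x y"
  by (simp add: cinner_def sum_distrib_left algebra_simps)

lemma cinner_add_left: "cinner (x + y) z = cinner x z + cinner y z"
  by (simp add: cinner_def distrib_right sum.distrib)

lemma cinner_diff_left: "cinner (x - y) z = cinner x z - cinner y z"
  by (simp add: cinner_def left_diff_distrib sum_subtractf)

lemma cinner_scale_left: "cinner (c *s x) y = cnj c * cinner x y"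
  by (simp add: cinner_def sum_distrib_left algebra_simps)

lemma cinner_sum_right: "cinner x (sum f A) = (\<Sum>a\<in>A. cinner x (f a))"
  unfolding cinner_def by (simp add: sum_distrib_left sum.swap[of _ UNIV])

lemma cinner_zero_left [simp]: "cinner 0 x = 0"
  and cinner_zero_right [simp]: "cinner x 0 = 0"
  by (simp_all add: cinner_def)

lemma cinner_self_norm: "cinner x x = complex_of_real ((norm x)\<^sup>2)"
  by (simp add: cinner_def norm_vec_def L2_set_def sum_nonneg of_real_sum complex_norm_square
      mult.commute del: of_real_power)

lemma continuous_on_cinner_right: "continuous_on X (\<lambda>v. cinner s v)"
  unfolding cinner_def by (intro continuous_intros)

lemma continuous_on_cinner_self: "continuous_on X (\<lambda>v. cinner v v)"
  unfolding cinner_def by (intro continuous_intros)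

lemma continuous_on_Re_cquad: "continuous_on X (\<lambda>v. Re (cquad A v))"
  unfolding cquad_def matrix_vector_mult_def by (intro continuous_intros)

lemma matrix_vector_mult_scale: "A *v (c *s x) = c *s (A *v (x::complex^'n))"
  by (simp add: vec_eq_iff matrix_vector_mult_def sum_distrib_left mult_ac)

lemma matrix_vector_mult_diff: "A *v (x - y) = A *v x - A *v (y::complex^'n)"
  by (simp add: vec_eq_iff matrix_vector_mult_def sum_subtractf right_diff_distrib)

lemma cquad_scale: "cquad A (c *s x) = cnj c * c * cquad A x"
  by (simp add: cquad_cinner matrix_vector_mult_scale cinner_scale_left cinner_scale_right)

lemma cquad_add: "cquad (X + Y) w = cquad X w + cquad Y w"
  by (simp add: cquad_def matrix_vector_mult_def sum.distrib distrib_left distrib_right)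

lemma cquad_scaleR: "cquad (c *\<^sub>R X) w = complex_of_real c * cquad X w"
  by (simp add: cquad_def matrix_vector_mult_def sum_distrib_left
      scaleR_conv_of_real[where 'a=complex] mult_ac)

lemma cadj_nth [simp]: "cadj A $ i $ j = cnj (A $ j $ i)"
  by (simp add: cadj_def)

lemma cadj_cadj [simp]: "cadj (cadj A) = A"
  by (simp add: vec_eq_iff)

lemma cadj_mult: "cadj (A ** B) = cadj B ** cadj A"
  by (simp add: vec_eq_iff matrix_matrix_mult_def mult.commute)

lemma cadj_add: "cadj (A + B) = cadj A + cadj B"
  by (simp add: vec_eq_iff)

lemma cadj_diff: "cadj (A - B) = cadj A - cadj B"
  by (simp add: vec_eq_iff)

lemma cadj_scaleR: "cadj (c *\<^sub>R A) = c *\<^sub>R cadj A"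
  by (simp add: vec_eq_iff)

lemma cadj_mat: "cadj (mat z) = mat (cnj z)"
  by (simp add: vec_eq_iff mat_def)

lemma cadj_cdiag: "cadj (cdiag d) = cdiag d"
  by (simp add: vec_eq_iff cdiag_def)

lemma cinner_cadj: "cinner x (M *v y) = cinner (cadj M *v x) y"
proof -
  have "cinner x (M *v y) = (\<Sum>i\<in>UNIV. \<Sum>j\<in>UNIV. cnj (x$i) * M$i$j * y$j)"
    by (simp add: cinner_def matrix_vector_mult_def sum_distrib_left mult.assoc)
  also have "\<dots> = (\<Sum>j\<in>UNIV. \<Sum>i\<in>UNIV. cnj (x$i) * M$i$j * y$j)"
    by (rule sum.swap)
  also have "\<dots> = cinner (cadj M *v x) y"
    by (simp add: cinner_def matrix_vector_mult_def sum_distrib_right sum_distrib_left mult_ac)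
  finally show ?thesis .
qed

lemma hermitian_cinner: "hermitian M \<Longrightarrow> cinner x (M *v y) = cinner (M *v x) y"
  by (simp add: hermitian_def cinner_cadj)

lemma hermitian_cquad_Reals: "hermitian M \<Longrightarrow> cquad M v \<in> \<real>"
  by (metis Reals_cnj_iff cinner_commute cquad_cinner hermitian_cinner)

lemma unitary_mult_cadj: "unitary U \<Longrightarrow> U ** cadj U = mat 1"
  unfolding unitary_def using matrix_left_right_inverse by blast

lemma unitary_cadj_mv: "unitary U \<Longrightarrow> cadj U *v (U *v w) = w"
  by (simp add: unitary_def matrix_vector_mul_assoc)

lemma unitary_mv_cadj: "unitary U \<Longrightarrow> U *v (cadj U *v w) = w"
  by (simp add: unitary_mult_cadj matrix_vector_mul_assoc)

section \<open>The spectral theorem for Hermitian matrices\<close>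

lemma affine_quadratic_nonpos_imp_zero:
  fixes a b :: real
  assumes "\<And>t. a * t + b * t\<^sup>2 \<le> 0"
  shows "a = 0"
proof (rule ccontr)
  assume "a \<noteq> 0"
  define B where "B = \<bar>b\<bar> + 1"
  have B: "B > 0" "B + b > 0" by (auto simp: B_def)
  have "a * (a / B) + b * (a / B)\<^sup>2 = a\<^sup>2 * (B + b) / B\<^sup>2"
    using B by (simp add: field_simps power2_eq_square)
  also have "\<dots> > 0"
    using \<open>a \<noteq> 0\<close> B by simp
  finally show False using assms[of "a / B"] by linarith
qed

text \<open>First-order condition at a maximiser of the Rayleigh quotient on the orthogonal complement
  of an \<open>A\<close>-invariant set: the residual \<open>r = A v - l v\<close> lies in that complement, and moving from
  \<open>v\<close> towards \<open>r\<close> increases the quotient to first order by \<open>|r|\<^sup>2\<close>.\<close>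
lemma hermitian_rayleigh_max_eigenvector:
  fixes A :: "complex^'n^'n"
  assumes herm: "hermitian A"
    and max: "\<And>x. \<forall>s\<in>S. cinner s x = 0 \<Longrightarrow> Re (cquad A x) \<le> l * Re (cinner x x)"
    and vS: "\<forall>s\<in>S. cinner s v = 0" and AvS: "\<forall>s\<in>S. cinner s (A *v v) = 0"
    and vl: "Re (cquad A v) = l * Re (cinner v v)"
  shows "A *v v = complex_of_real l *s v"
proof -
  define r where "r = A *v v - complex_of_real l *s v"
  have rS: "\<forall>s\<in>S. cinner s r = 0"
    using vS AvS by (simp add: r_def cinner_diff_right cinner_scale_right)
  have vAr: "Re (cinner v (A *v r)) = Re (cinner r (A *v v))"
    using hermitian_cinner[OF herm, of v r] cinner_commute[of "A *v v" r] by simp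
  have "2 * Re (cinner r r) * t + (Re (cquad A r) - l * Re (cinner r r)) * t\<^sup>2 \<le> 0" for t
  proof -
    define x where "x = v + complex_of_real t *s r"
    have "Re (cquad A x) - l * Re (cinner x x)
        = 2 * t * Re (cinner r (A *v v) - complex_of_real l * cinner r v)
          + t\<^sup>2 * (Re (cquad A r) - l * Re (cinner r r))"
      using vl vAr cinner_commute[of r v]
      by (simp add: x_def cquad_cinner matrix_vector_right_distrib matrix_vector_mult_scale
          cinner_add_left cinner_add_right cinner_scale_left cinner_scale_right
          power2_eq_square algebra_simps)
    also have "cinner r (A *v v) - complex_of_real l * cinner r v = cinner r r"
      by (simp add: r_def cinner_diff_right cinner_scale_right)
    finally show ?thesis
      using max[of x] vS rS by (simp add: x_def cinner_add_right cinner_scale_right algebra_simps)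
  qed
  then have "2 * Re (cinner r r) = 0"
    by (rule affine_quadratic_nonpos_imp_zero)
  then show ?thesis
    by (simp add: r_def cinner_self_norm)
qed

lemma cinner_self_normalized:
  fixes w :: "complex^'n"
  assumes "w \<noteq> 0"
  shows "cinner (complex_of_real (1 / norm w) *s w) (complex_of_real (1 / norm w) *s w) = 1"
proof -
  have "cinner (complex_of_real (1 / norm w) *s w) (complex_of_real (1 / norm w) *s w)
      = complex_of_real (1 / norm w) * complex_of_real (1 / norm w) * cinner w w"
    by (simp add: cinner_scale_left cinner_scale_right)
  then show ?thesis
    using assms by (simp add: cinner_self_norm power2_eq_square)
qed

lemma hermitian_eigenvector_orthogonal:
  fixes A :: "complex^'n^'n"
  assumes herm: "hermitian A"
    and eig: "\<forall>s\<in>S. \<exists>l::real. A *v s = complex_of_real l *s s"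
    and w: "w \<noteq> 0" "\<forall>s\<in>S. cinner s w = 0"
  shows "\<exists>v. cinner v v = 1 \<and> (\<forall>s\<in>S. cinner s v = 0) \<and> (\<exists>l::real. A *v v = complex_of_real l *s v)"
proof -
  define K where "K = {v. cinner v v = 1} \<inter> (\<Inter>s\<in>S. {v. cinner s v = 0})"
  define u where "u = complex_of_real (1 / norm w) *s w"
  have "cinner u u = 1"
    unfolding u_def by (rule cinner_self_normalized[OF w(1)])
  moreover have "\<forall>s\<in>S. cinner s u = 0"
    using w(2) by (simp add: u_def cinner_scale_right)
  ultimately have "K \<noteq> {}"
    unfolding K_def by blast
  have "compact K"
    unfolding compact_eq_bounded_closed
  proof
    have "norm v = 1" if "cinner v v = 1" for v :: "complex^'n"
    proof -
      have "complex_of_real ((norm v)\<^sup>2) = 1"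
        using that by (simp only: cinner_self_norm)
      then have "(norm v)\<^sup>2 = 1"
        by (simp only: of_real_eq_1_iff)
      then show ?thesis
        using norm_ge_zero[of v] by (auto simp: power2_eq_1_iff)
    qed
    then show "bounded K"
      unfolding bounded_iff K_def by (metis (mono_tags) Int_iff mem_Collect_eq order_refl)
    show "closed K"
      unfolding K_def
      by (intro closed_Int closed_INT ballI closed_Collect_eq continuous_on_cinner_self
          continuous_on_cinner_right continuous_on_const)
  qed
  obtain v where vK: "v \<in> K" and vmax: "\<And>y. y \<in> K \<Longrightarrow> Re (cquad A y) \<le> Re (cquad A v)"
    using continuous_attains_sup[OF \<open>compact K\<close> \<open>K \<noteq> {}\<close> continuous_on_Re_cquad] by blast
  define l where "l = Re (cquad A v)"
  have vv: "cinner v v = 1" and vS: "\<forall>s\<in>S. cinner s v = 0"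
    using vK by (auto simp: K_def)
  have "Re (cquad A x) \<le> l * Re (cinner x x)" if xS: "\<forall>s\<in>S. cinner s x = 0" for x
  proof (cases "x = 0")
    case False
    define c where "c = 1 / norm x"
    have "cinner (complex_of_real c *s x) (complex_of_real c *s x) = 1"
      unfolding c_def by (rule cinner_self_normalized[OF False])
    with xS have "complex_of_real c *s x \<in> K"
      by (simp add: K_def cinner_scale_right)
    then have "c\<^sup>2 * Re (cquad A x) \<le> l"
      using vmax[of "complex_of_real c *s x"] by (simp add: l_def cquad_scale power2_eq_square)
    then show ?thesis
      using False by (simp add: c_def cinner_self_norm field_simps)
  qed (simp add: cquad_cinner)
  moreover have "\<forall>s\<in>S. cinner s (A *v v) = 0"
  proof
    fix s assume "s \<in> S"
    then obtain m :: real where "A *v s = complex_of_real m *s s"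
      using eig by blast
    then show "cinner s (A *v v) = 0"
      using vS \<open>s \<in> S\<close> by (simp add: hermitian_cinner[OF herm] cinner_scale_left)
  qed
  moreover have "Re (cquad A v) = l * Re (cinner v v)"
    by (simp add: l_def vv)
  ultimately have "A *v v = complex_of_real l *s v"
    using hermitian_rayleigh_max_eigenvector[OF herm _ vS] by blast
  then show ?thesis
    using vv vS by blast
qed

definition orthonormal :: "(complex^'n) set \<Rightarrow> bool" where
  "orthonormal S \<longleftrightarrow> (\<forall>x\<in>S. \<forall>y\<in>S. cinner x y = (if x = y then 1 else 0))"

lemma orthogonal_nonzero_exists:
  fixes S :: "(complex^'n) set"
  assumes fin: "finite S" and card: "card S < CARD('n)" and on: "orthonormal S"
  shows "\<exists>w. w \<noteq> 0 \<and> (\<forall>s\<in>S. cinner s w = 0)"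
proof -
  have "vec.span S \<noteq> UNIV"
  proof
    assume "vec.span S = UNIV"
    then have "vec.dim (UNIV :: (complex^'n) set) \<le> card S"
      using vec.dim_le_card[of UNIV S] fin by simp
    then show False using card vec_dim_card by (metis not_le)
  qed
  then obtain x where x: "x \<notin> vec.span S" by blast
  define w where "w = x - (\<Sum>s\<in>S. cinner s x *s s)"
  have "w \<noteq> 0"
  proof
    assume "w = 0"
    then have "x = (\<Sum>s\<in>S. cinner s x *s s)" by (simp add: w_def)
    also have "\<dots> \<in> vec.span S"
      by (intro vec.span_sum vec.span_scale vec.span_base)
    finally show False using x by simp
  qed
  moreover have "cinner t w = 0" if t: "t \<in> S" for t
  proof -
    have "(\<Sum>s\<in>S. cinner s x * cinner t s) = (\<Sum>s\<in>S. if t = s then cinner s x else 0)"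
      using on t by (intro sum.cong) (auto simp: orthonormal_def)
    then show ?thesis
      using fin t by (simp add: w_def cinner_diff_right cinner_sum_right cinner_scale_right)
  qed
  ultimately show ?thesis by blast
qed

lemma orthonormal_insert:
  assumes "orthonormal S" "cinner v v = 1" "\<forall>s\<in>S. cinner s v = 0"
  shows "orthonormal (insert v S)"
  using assms cinner_commute[of v] unfolding orthonormal_def
  by (metis complex_cnj_zero insert_iff)

lemma hermitian_orthonormal_eigenvectors:
  fixes A :: "complex^'n^'n"
  assumes herm: "hermitian A" and k: "k \<le> CARD('n)"
  shows "\<exists>S. finite S \<and> card S = k \<and> orthonormal S \<and>
           (\<forall>s\<in>S. \<exists>l::real. A *v s = complex_of_real l *s s)"
  using k
proof (induction k)
  case 0
  then show ?case by (intro exI[of _ "{}"]) (simp add: orthonormal_def)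
next
  case (Suc k)
  then obtain S where S: "finite S" "card S = k" "orthonormal S"
      "\<forall>s\<in>S. \<exists>l::real. A *v s = complex_of_real l *s s"
    by auto
  obtain w where "w \<noteq> 0" "\<forall>s\<in>S. cinner s w = 0"
    using orthogonal_nonzero_exists[OF S(1) _ S(3)] S(2) Suc.prems by auto
  then obtain v where v: "cinner v v = 1" "\<forall>s\<in>S. cinner s v = 0"
      "\<exists>l::real. A *v v = complex_of_real l *s v"
    using hermitian_eigenvector_orthogonal[OF herm S(4)] by blast
  have "v \<notin> S" using v by auto
  then have "card (insert v S) = Suc k"
    using S(1,2) by simp
  then show ?case
    using S(1,4) v(3) orthonormal_insert[OF S(3) v(1,2)] by (intro exI[of _ "insert v S"]) simp
qed

lemma cdiag_mv: "(cdiag d *v w) $ k = complex_of_real (d k) * w $ k"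
proof -
  have "(cdiag d *v w) $ k = (\<Sum>j\<in>UNIV. (if k = j then complex_of_real (d k) else 0) * w $ j)"
    by (simp add: cdiag_def matrix_vector_mult_def)
  also have "\<dots> = (\<Sum>j\<in>UNIV. if k = j then complex_of_real (d k) * w $ k else 0)"
    by (rule sum.cong) auto
  finally show ?thesis by simp
qed

lemma matrix_mult_cdiag_nth: "(M ** cdiag d) $ i $ j = M $ i $ j * complex_of_real (d j)"
proof -
  have "(M ** cdiag d) $ i $ j = (\<Sum>k\<in>UNIV. if k = j then M $ i $ k * complex_of_real (d j) else 0)"
    by (simp add: cdiag_def matrix_matrix_mult_def if_distrib cong: if_cong)
  then show ?thesis by simp
qed

lemma cdiag_mult: "cdiag a ** cdiag b = cdiag (\<lambda>j. a j * b j)"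
  by (simp add: vec_eq_iff matrix_mult_cdiag_nth) (simp add: cdiag_def)

lemma cdiag_add: "cdiag a + cdiag b = cdiag (\<lambda>j. a j + b j)"
  by (simp add: vec_eq_iff cdiag_def)

lemma cdiag_const: "cdiag (\<lambda>j. c) = mat (complex_of_real c)"
  by (simp add: vec_eq_iff cdiag_def mat_def)

theorem hermitian_spectral:
  fixes A :: "complex^'n^'n"
  assumes herm: "hermitian A"
  shows "\<exists>U d. unitary U \<and> A = U ** cdiag d ** cadj U"
proof -
  obtain S where S: "finite S" "card S = CARD('n)" "orthonormal S"
      "\<forall>s\<in>S. \<exists>l::real. A *v s = complex_of_real l *s s"
    using hermitian_orthonormal_eigenvectors[OF herm order_refl] by blast
  obtain f where f: "bij_betw f (UNIV::'n set) S"
    using finite_same_card_bij[of "UNIV::'n set" S] S by auto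
  have fS: "f i \<in> S" for i using f by (auto simp: bij_betw_def)
  have finj: "f i = f j \<longleftrightarrow> i = j" for i j using f by (auto simp: bij_betw_def inj_on_def)
  have "\<forall>j. \<exists>l::real. A *v f j = complex_of_real l *s f j"
    using S(4) fS by blast
  then obtain d where d: "\<And>j. A *v f j = complex_of_real (d j) *s f j"
    by metis
  define U :: "complex^'n^'n" where "U = (\<chi> i j. f j $ i)"
  have "(cadj U ** U) $ i $ j = cinner (f i) (f j)" for i j
    by (simp add: U_def matrix_matrix_mult_def cinner_def)
  also have "cinner (f i) (f j) = (if i = j then 1 else 0)" for i j
    using S(3) fS finj by (simp add: orthonormal_def)
  finally have U: "unitary U"
    by (simp add: unitary_def vec_eq_iff mat_def)
  have "(A ** U) $ i $ j = (A *v f j) $ i" for i j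
    by (simp add: U_def matrix_matrix_mult_def matrix_vector_mult_def)
  then have "A ** U = U ** cdiag d"
    by (simp add: vec_eq_iff d matrix_mult_cdiag_nth U_def mult.commute)
  then have "A = U ** cdiag d ** cadj U"
    using unitary_mult_cadj[OF U] by (metis matrix_mul_assoc matrix_mul_rid)
  then show ?thesis using U by blast
qed

lemma cquad_conj: "cquad (U ** M ** cadj U) v = cquad M (cadj U *v v)"
  by (simp add: cquad_cinner flip: matrix_vector_mul_assoc) (simp add: cinner_cadj)

lemma cquad_cdiag: "cquad (cdiag d) w = complex_of_real (\<Sum>k\<in>UNIV. d k * (cmod (w$k))\<^sup>2)"
  by (simp add: cquad_def cdiag_mv of_real_sum complex_norm_square mult_ac del: of_real_power)

lemma cquad_cdiag_axis: "cquad (cdiag d) (axis k 1) = complex_of_real (d k)"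
proof -
  have "(\<Sum>j\<in>UNIV. d j * (cmod (axis k 1 $ j))\<^sup>2) = (\<Sum>j\<in>UNIV. if j = k then d k else 0)"
    by (intro sum.cong) (auto simp: axis_def)
  then show ?thesis by (simp add: cquad_cdiag)
qed

lemma unitary_mv_axis_nonzero: "unitary U \<Longrightarrow> U *v axis k 1 \<noteq> 0"
  by (metis axis_eq_0_iff matrix_vector_mult_0_right one_neq_zero unitary_cadj_mv)

lemma hermitian_spectral_form: "hermitian (U ** cdiag d ** cadj U)"
  by (simp add: hermitian_def cadj_mult cadj_cdiag matrix_mul_assoc)

lemma psd_spectral_form:
  assumes "\<forall>k. d k \<ge> 0"
  shows "psd (U ** cdiag d ** cadj U)"
  unfolding psd_def
  using hermitian_spectral_form hermitian_cquad_Reals[OF hermitian_spectral_form]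
  by (auto simp: cquad_conj cquad_cdiag assms intro!: sum_nonneg)

lemma psd_spectral_form_nonneg:
  assumes "unitary U" "psd (U ** cdiag d ** cadj U)"
  shows "d k \<ge> 0"
proof -
  have "Re (cquad (U ** cdiag d ** cadj U) (U *v axis k 1)) \<ge> 0"
    using assms(2) by (simp add: psd_def)
  then show ?thesis
    by (simp add: cquad_conj unitary_cadj_mv[OF assms(1)] cquad_cdiag_axis)
qed

lemma posdef_spectral_form_pos:
  assumes "unitary U" "posdef (U ** cdiag d ** cadj U)"
  shows "d k > 0"
proof -
  have "Re (cquad (U ** cdiag d ** cadj U) (U *v axis k 1)) > 0"
    using assms(2) unitary_mv_axis_nonzero[OF assms(1)] by (simp add: posdef_def)
  then show ?thesis
    by (simp add: cquad_conj unitary_cadj_mv[OF assms(1)] cquad_cdiag_axis)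
qed

lemma posdef_imp_psd: "posdef A \<Longrightarrow> psd A"
  unfolding posdef_def psd_def
  by (metis cinner_zero_left cquad_cinner hermitian_cquad_Reals less_eq_real_def zero_complex.sel(1))

lemma psd_spectral:
  assumes "psd A"
  shows "\<exists>U d. unitary U \<and> (\<forall>i. d i \<ge> 0) \<and> A = U ** cdiag d ** cadj U"
proof -
  have "hermitian A"
    using assms by (simp add: psd_def)
  then obtain U d where U: "unitary U" and A: "A = U ** cdiag d ** cadj U"
    using hermitian_spectral by blast
  moreover have "\<forall>i. d i \<ge> 0"
    using psd_spectral_form_nonneg[OF U] assms A by simp
  ultimately show ?thesis
    using U by (intro exI[of _ U] exI[of _ d]) simp
qed

lemma mlog_psd:
  assumes "psd A"
  shows "\<exists>U d. unitary U \<and> (\<forall>i. d i \<ge> 0) \<and> A = U ** cdiag d ** cadj U \<and>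
       mlog A = U ** cdiag (\<lambda>i. if d i > 0 then ln (d i) else 0) ** cadj U"
proof -
  obtain U d where "unitary U" "\<forall>i. d i \<ge> 0" "A = U ** cdiag d ** cadj U"
    using psd_spectral[OF assms] by blast
  then have "\<exists>L U d. unitary U \<and> (\<forall>i. d i \<ge> 0) \<and> A = U ** cdiag d ** cadj U \<and>
       L = U ** cdiag (\<lambda>i. if d i > 0 then ln (d i) else 0) ** cadj U"
    by blast
  from someI_ex[OF this] show ?thesis
    unfolding mlog_def by blast
qed

lemma mlog_posdef:
  assumes "posdef A"
  shows "\<exists>U d. unitary U \<and> (\<forall>i. d i > 0) \<and> A = U ** cdiag d ** cadj U \<and>
       mlog A = U ** cdiag (\<lambda>i. ln (d i)) ** cadj U"
proof -
  obtain U d where U: "unitary U" and A: "A = U ** cdiag d ** cadj U"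
    and L: "mlog A = U ** cdiag (\<lambda>i. if d i > 0 then ln (d i) else 0) ** cadj U"
    using mlog_psd[OF posdef_imp_psd[OF assms]] by blast
  have d: "\<forall>i. d i > 0"
    using posdef_spectral_form_pos[OF U, of d] assms unfolding A by blast
  then have "mlog A = U ** cdiag (\<lambda>i. ln (d i)) ** cadj U"
    using L by simp
  with U d A show ?thesis
    by blast
qed

section \<open>Eigenvalues, trace and determinant in spectral form\<close>

lemma mat_mv: "mat z *v w = z *s (w::complex^'n)"
proof -
  have "(mat z *v w) $ i = (\<Sum>j\<in>UNIV. (if i = j then z else 0) * w $ j)" for i
    by (simp add: matrix_vector_mult_def mat_def)
  also have "\<dots> i = (\<Sum>j\<in>UNIV. if i = j then z * w $ i else 0)" for i
    by (rule sum.cong) auto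
  finally show ?thesis by (simp add: vec_eq_iff)
qed

lemma real_eigenvalues_spectral_form:
  assumes U: "unitary U"
  shows "real_eigenvalues (U ** cdiag d ** cadj U) = range d"
proof
  show "range d \<subseteq> real_eigenvalues (U ** cdiag d ** cadj U)"
  proof
    fix r assume "r \<in> range d"
    then obtain k where r: "r = d k" by blast
    have "cdiag d *v axis k 1 = complex_of_real (d k) *s axis k 1"
      by (simp add: vec_eq_iff cdiag_mv axis_def)
    then have "(U ** cdiag d ** cadj U) *v (U *v axis k 1) = complex_of_real r *s (U *v axis k 1)"
      by (simp add: r unitary_cadj_mv[OF U] matrix_vector_mult_scale flip: matrix_vector_mul_assoc)
    then show "r \<in> real_eigenvalues (U ** cdiag d ** cadj U)"
      using unitary_mv_axis_nonzero[OF U] by (auto simp: real_eigenvalues_def)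
  qed
next
  show "real_eigenvalues (U ** cdiag d ** cadj U) \<subseteq> range d"
  proof
    fix r assume "r \<in> real_eigenvalues (U ** cdiag d ** cadj U)"
    then obtain v where v: "v \<noteq> 0" "(U ** cdiag d ** cadj U) *v v = complex_of_real r *s v"
      by (auto simp: real_eigenvalues_def)
    define w where "w = cadj U *v v"
    have "w \<noteq> 0"
      using v unitary_mv_cadj[OF U, of v] by (metis matrix_vector_mult_0_right w_def)
    then obtain k where k: "w $ k \<noteq> 0" by (auto simp: vec_eq_iff)
    have "cdiag d *v w = cadj U *v ((U ** cdiag d ** cadj U) *v v)"
      by (simp add: w_def unitary_cadj_mv[OF U] flip: matrix_vector_mul_assoc)
    also have "\<dots> = complex_of_real r *s w"
      by (simp add: v w_def matrix_vector_mult_scale)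
    finally have "complex_of_real (d k) * w $ k = complex_of_real r * w $ k"
      by (simp add: vec_eq_iff cdiag_mv)
    then have "r = d k"
      using k by simp
    then show "r \<in> range d" by simp
  qed
qed

lemma finite_real_eigenvalues:
  assumes "hermitian A"
  shows "finite (real_eigenvalues A)"
  using hermitian_spectral[OF assms] real_eigenvalues_spectral_form by fastforce

lemma psd_if_real_eigenvalues_nonneg:
  assumes "hermitian A" "\<forall>r\<in>real_eigenvalues A. r \<ge> 0"
  shows "psd A"
  using hermitian_spectral[OF assms(1)] assms(2) real_eigenvalues_spectral_form psd_spectral_form
  by (metis rangeI)

lemma real_eigenvalues_mat_diff:
  "r \<in> real_eigenvalues (mat (complex_of_real c) - A) \<longleftrightarrow> c - r \<in> real_eigenvalues A"
proof -
  have "(mat (complex_of_real c) - A) *v v = complex_of_real r *s v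
      \<longleftrightarrow> A *v v = complex_of_real (c - r) *s v" for v
    by (auto simp: vec_eq_iff matrix_vector_mult_diff_rdistrib mat_mv algebra_simps)
  then show ?thesis
    by (simp add: real_eigenvalues_def)
qed

lemma real_eigenvalues_diff_mat:
  "r \<in> real_eigenvalues (A - mat (complex_of_real c)) \<longleftrightarrow> r + c \<in> real_eigenvalues A"
proof -
  have "(A - mat (complex_of_real c)) *v v = complex_of_real r *s v
      \<longleftrightarrow> A *v v = complex_of_real (r + c) *s v" for v
    by (auto simp: vec_eq_iff matrix_vector_mult_diff_rdistrib mat_mv algebra_simps)
  then show ?thesis
    by (simp add: real_eigenvalues_def)
qed

lemma hermitian_mat_diff: "hermitian A \<Longrightarrow> hermitian (mat (complex_of_real c) - A)"
  and hermitian_diff_mat: "hermitian A \<Longrightarrow> hermitian (A - mat (complex_of_real c))"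
  by (simp_all add: hermitian_def cadj_diff cadj_mat)

lemma det_spectral_form:
  assumes "unitary U"
  shows "det (U ** cdiag d ** cadj U) = complex_of_real (\<Prod>i\<in>UNIV. d i)"
proof -
  have "det (U ** cdiag d ** cadj U) = det (cdiag d) * det (cadj U ** U)"
    by (simp add: det_mul)
  also have "det (cadj U ** U) = 1"
    using assms by (simp add: unitary_def)
  also have "det (cdiag d) = (\<Prod>i\<in>UNIV. complex_of_real (d i))"
    by (subst det_diagonal) (auto simp: cdiag_def)
  finally show ?thesis by simp
qed

lemma trace_spectral_form:
  assumes "unitary U"
  shows "trace (U ** cdiag d ** cadj U) = complex_of_real (\<Sum>i\<in>UNIV. d i)"
proof -
  have "trace (U ** cdiag d ** cadj U) = trace (cadj U ** (U ** cdiag d))"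
    by (rule trace_mul_sym)
  also have "\<dots> = trace (cdiag d)"
    using assms by (simp add: matrix_mul_assoc unitary_def)
  finally show ?thesis by (simp add: trace_def cdiag_def)
qed

lemma neg_logdet_posdef:
  assumes "posdef A"
  shows "neg_logdet A = - Re (trace (mlog A))"
proof -
  obtain U d where U: "unitary U" and d: "\<forall>i. d i > 0" and A: "A = U ** cdiag d ** cadj U"
    and L: "mlog A = U ** cdiag (\<lambda>i. ln (d i)) ** cadj U"
    using mlog_posdef[OF assms] by blast
  have "neg_logdet A = - ln (\<Prod>i\<in>UNIV. d i)"
    by (simp add: neg_logdet_def A det_spectral_form[OF U] del: of_real_prod)
  also have "\<dots> = - (\<Sum>i\<in>UNIV. ln (d i))"
    using d by (subst ln_prod) (auto simp: less_imp_neq[symmetric])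
  also have "\<dots> = - Re (trace (mlog A))"
    by (simp add: L trace_spectral_form[OF U])
  finally show ?thesis .
qed

lemma cadj_mult_mult_nth: "(cadj V ** Q ** V) $ j $ j = cquad Q (column j V)"
proof -
  have "(cadj V ** Q ** V) $ j $ j = (\<Sum>k\<in>UNIV. \<Sum>n\<in>UNIV. cnj (V$n$j) * Q$n$k * V$k$j)"
    by (simp add: matrix_matrix_mult_def sum_distrib_right)
  also have "\<dots> = (\<Sum>n\<in>UNIV. \<Sum>k\<in>UNIV. cnj (V$n$j) * Q$n$k * V$k$j)"
    by (rule sum.swap)
  also have "\<dots> = cquad Q (column j V)"
    by (simp add: cquad_def matrix_vector_mult_def column_def sum_distrib_left mult.assoc)
  finally show ?thesis .
qed

lemma trace_mult_spectral_form:
  "trace (Q ** (V ** cdiag e ** cadj V)) = (\<Sum>j\<in>UNIV. cquad Q (column j V) * complex_of_real (e j))"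
proof -
  have "trace (Q ** (V ** cdiag e ** cadj V)) = trace ((Q ** V ** cdiag e) ** cadj V)"
    by (simp add: matrix_mul_assoc)
  also have "\<dots> = trace ((cadj V ** Q ** V) ** cdiag e)"
    by (subst trace_mul_sym) (simp add: matrix_mul_assoc)
  finally show ?thesis
    by (simp add: trace_def matrix_mult_cdiag_nth cadj_mult_mult_nth)
qed

lemma Re_trace_mult_spectral_form:
  "Re (trace (Q ** (V ** cdiag e ** cadj V))) = (\<Sum>j\<in>UNIV. e j * Re (cquad Q (column j V)))"
  by (simp add: trace_mult_spectral_form mult.commute)

section \<open>Convexity of the matrix inverse\<close>

lemma matrix_add_rdistrib: "(B + C) ** A = B ** A + C ** (A::'a::semiring_1^'n^'m)"
  by (simp add: vec_eq_iff matrix_matrix_mult_def sum.distrib distrib_right)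

lemma matrix_diff_ldistrib: "A ** (B - C) = A ** B - A ** (C::'a::ring_1^'n^'m)"
  by (simp add: vec_eq_iff matrix_matrix_mult_def sum_subtractf right_diff_distrib)

lemma matrix_diff_rdistrib: "(B - C) ** A = B ** A - C ** (A::'a::ring_1^'n^'m)"
  by (simp add: vec_eq_iff matrix_matrix_mult_def sum_subtractf left_diff_distrib)

lemma cquad_mat: "cquad (mat z) w = z * cinner w w"
  by (simp add: cquad_cinner mat_mv cinner_scale_right)

lemma posdef_convex_combination:
  fixes X Y :: "complex^'n^'n"
  assumes X: "posdef X" and Y: "posdef Y" and u: "u \<ge> 0" "v \<ge> 0" "u + v = 1"
  shows "posdef (u *\<^sub>R X + v *\<^sub>R Y)"
  unfolding posdef_def
proof (intro conjI allI impI)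
  show "hermitian (u *\<^sub>R X + v *\<^sub>R Y)"
    using X Y by (simp add: posdef_def hermitian_def cadj_add cadj_scaleR)
  fix w :: "complex^'n" assume "w \<noteq> 0"
  then have "cquad X w \<in> \<real>" "Re (cquad X w) > 0" "cquad Y w \<in> \<real>" "Re (cquad Y w) > 0"
    using X Y by (auto simp: posdef_def)
  moreover have "u * Re (cquad X w) + v * Re (cquad Y w) > 0"
    using u \<open>Re (cquad X w) > 0\<close> \<open>Re (cquad Y w) > 0\<close>
    by (cases "u = 0") (auto intro: add_pos_nonneg)
  ultimately show "cquad (u *\<^sub>R X + v *\<^sub>R Y) w \<in> \<real>" "Re (cquad (u *\<^sub>R X + v *\<^sub>R Y) w) > 0"
    by (simp_all add: cquad_add cquad_scaleR)
qed

lemma convex_posdef: "convex {A :: complex^'n^'n. posdef A}"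
  by (simp add: convex_def posdef_convex_combination)

lemma trace_scaleR: "trace (c *\<^sub>R (X::complex^'n^'n)) = complex_of_real c * trace X"
  by (simp add: trace_def scaleR_conv_of_real[where 'a=complex] sum_distrib_left)

lemma convex_density_pd: "convex (density_pd :: (complex^'n^'n) set)"
  unfolding convex_def density_pd_def
  by (auto simp: trace_add trace_scaleR posdef_convex_combination simp flip: of_real_add)

lemma posdef_add_mat:
  fixes A :: "complex^'n^'n"
  assumes "posdef A" "s \<ge> 0"
  shows "posdef (A + mat (complex_of_real s))"
  unfolding posdef_def
proof (intro conjI allI impI)
  show "hermitian (A + mat (complex_of_real s))"
    using assms by (simp add: posdef_def hermitian_def cadj_add cadj_mat)
  fix w :: "complex^'n" assume "w \<noteq> 0"
  then have "cquad A w \<in> \<real>" "Re (cquad A w) > 0"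
    using assms(1) by (auto simp: posdef_def)
  moreover have "complex_of_real s * cinner w w \<in> \<real>" "Re (complex_of_real s * cinner w w) \<ge> 0"
    using assms(2) by (simp_all add: cinner_self_norm)
  ultimately show "cquad (A + mat (complex_of_real s)) w \<in> \<real>"
      "Re (cquad (A + mat (complex_of_real s)) w) > 0"
    by (simp_all add: cquad_add cquad_mat add_pos_nonneg)
qed

lemma mat_of_real: "mat (complex_of_real s) = s *\<^sub>R (mat 1 :: complex^'n^'n)"
  by (simp add: vec_eq_iff mat_def of_real_def)

lemma trace_mat_mult: "trace (mat (complex_of_real c) ** A) = complex_of_real c * trace A"
  by (simp add: mat_of_real trace_scaleR flip: scalar_matrix_assoc)

lemma spectral_form_add_mat:
  assumes U: "unitary U"
  shows "U ** cdiag e ** cadj U + mat (complex_of_real s) = U ** cdiag (\<lambda>j. e j + s) ** cadj U"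
proof -
  have "U ** cdiag (\<lambda>j. s) ** cadj U = s *\<^sub>R (U ** cadj U)"
    by (simp add: cdiag_const mat_of_real matrix_scalar_ac scalar_matrix_assoc)
  then have "mat (complex_of_real s) = U ** cdiag (\<lambda>j. s) ** cadj U"
    using unitary_mult_cadj[OF U] by (simp add: mat_of_real)
  then show ?thesis
    by (simp add: matrix_add_ldistrib matrix_add_rdistrib flip: cdiag_add)
qed

lemma matrix_inv_eqI:
  fixes A B :: "'a::field^'n^'n"
  assumes "A ** B = mat 1"
  shows "matrix_inv A = B"
proof -
  have "B ** A = mat 1"
    using assms matrix_left_right_inverse by blast
  then have "\<exists>A'. A ** A' = mat 1 \<and> A' ** A = mat 1"
    using assms by blast
  then have "A ** matrix_inv A = mat 1 \<and> matrix_inv A ** A = mat 1"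
    unfolding matrix_inv_def by (rule someI_ex)
  then show ?thesis
    using assms by (metis matrix_mul_assoc matrix_mul_lid matrix_mul_rid)
qed

lemma spectral_form_mult_inverse:
  assumes U: "unitary U" and d: "\<forall>j. d j \<noteq> 0"
  shows "(U ** cdiag d ** cadj U) ** (U ** cdiag (\<lambda>j. 1 / d j) ** cadj U) = mat 1"
proof -
  have "(U ** cdiag d ** cadj U) ** (U ** cdiag (\<lambda>j. 1 / d j) ** cadj U)
      = U ** (cdiag d ** (cadj U ** U) ** cdiag (\<lambda>j. 1 / d j)) ** cadj U"
    by (simp add: matrix_mul_assoc)
  also have "\<dots> = U ** cdiag (\<lambda>j. 1) ** cadj U"
    using U d by (simp add: unitary_def cdiag_mult)
  finally show ?thesis
    using unitary_mult_cadj[OF U] by (simp add: cdiag_const)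
qed

lemma matrix_inv_spectral_form:
  assumes "unitary U" "\<forall>j. d j \<noteq> 0"
  shows "matrix_inv (U ** cdiag d ** cadj U) = U ** cdiag (\<lambda>j. 1 / d j) ** cadj U"
  using spectral_form_mult_inverse[OF assms] by (rule matrix_inv_eqI)

lemma posdef_mult_matrix_inv:
  assumes "posdef A"
  shows "A ** matrix_inv A = mat 1"
proof -
  obtain U d where U: "unitary U" and d: "\<forall>i. d i > 0" and A: "A = U ** cdiag d ** cadj U"
    using mlog_posdef[OF assms] by blast
  have "\<forall>i. d i \<noteq> 0"
    using d by (simp add: less_imp_neq[symmetric])
  then show ?thesis
    unfolding A matrix_inv_spectral_form[OF U \<open>\<forall>i. d i \<noteq> 0\<close>]
    by (rule spectral_form_mult_inverse[OF U])
qed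

text \<open>Variational formula \<open>x\<^sup>* M\<^sup>-\<^sup>1 x = max\<^sub>w (2 Re \<langle>w, x\<rangle> - w\<^sup>* M w)\<close>: the difference of the two sides
  is \<open>(w - M\<^sup>-\<^sup>1 x)\<^sup>* M (w - M\<^sup>-\<^sup>1 x) \<ge> 0\<close>.\<close>
lemma psd_cquad_inverse_ge:
  fixes M N :: "complex^'n^'n"
  assumes psd: "psd M" and MN: "M ** N = mat 1"
  shows "Re (cquad N x) \<ge> 2 * Re (cinner w x) - Re (cquad M w)"
proof -
  define b where "b = N *v x"
  have Mb: "M *v b = x"
    by (simp add: b_def matrix_vector_mul_assoc MN)
  have "cinner b (M *v w) = cinner x w"
    using hermitian_cinner[of M b w] psd Mb by (simp add: psd_def)
  moreover have "cinner b x = cnj (cquad N x)"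
    unfolding b_def cquad_cinner by (rule cinner_commute)
  moreover have "Re (cinner x w) = Re (cinner w x)"
    by (simp add: cinner_commute[of x w])
  moreover have "cquad M (w - b) = cquad M w - cinner w x - cinner b (M *v w) + cinner b x"
    by (simp add: cquad_cinner matrix_vector_mult_diff cinner_diff_left cinner_diff_right Mb)
  ultimately have "Re (cquad M (w - b)) = Re (cquad M w) - 2 * Re (cinner w x) + Re (cquad N x)"
    by simp
  moreover have "Re (cquad M (w - b)) \<ge> 0"
    using psd by (simp add: psd_def)
  ultimately show ?thesis
    by linarith
qed

lemma psd_cquad_inverse_eq:
  fixes M N :: "complex^'n^'n"
  assumes psd: "psd M" and MN: "M ** N = mat 1"
  shows "Re (cquad N x) = 2 * Re (cinner (N *v x) x) - Re (cquad M (N *v x))"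
proof -
  have "cquad M (N *v x) = cinner (N *v x) x"
    by (simp add: cquad_cinner matrix_vector_mul_assoc MN)
  moreover have "Re (cinner (N *v x) x) = Re (cquad N x)"
    by (simp add: cquad_cinner cinner_commute[of "N *v x"])
  ultimately show ?thesis
    by simp
qed

lemma convex_on_cquad_matrix_inv:
  "convex_on {A :: complex^'n^'n. posdef A} (\<lambda>X. Re (cquad (matrix_inv X) x))"
proof (rule convex_onI)
  fix X Y :: "complex^'n^'n" and t :: real
  assume t: "0 < t" "t < 1" and XY: "X \<in> {A. posdef A}" "Y \<in> {A. posdef A}"
  define Z where "Z = (1 - t) *\<^sub>R X + t *\<^sub>R Y"
  define w where "w = matrix_inv Z *v x"
  have psd: "psd X" "psd Y" and Z: "posdef Z"
    using XY t posdef_convex_combination[of X Y "1 - t" t] by (auto simp: Z_def posdef_imp_psd)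
  have "Re (cquad (matrix_inv Z) x) = 2 * Re (cinner w x) - Re (cquad Z w)"
    unfolding w_def by (rule psd_cquad_inverse_eq[OF posdef_imp_psd[OF Z] posdef_mult_matrix_inv[OF Z]])
  also have "\<dots> = (1 - t) * (2 * Re (cinner w x) - Re (cquad X w)) + t * (2 * Re (cinner w x) - Re (cquad Y w))"
    by (simp add: Z_def cquad_add cquad_scaleR) (simp add: algebra_simps)
  also have "\<dots> \<le> (1 - t) * Re (cquad (matrix_inv X) x) + t * Re (cquad (matrix_inv Y) x)"
    using t XY psd_cquad_inverse_ge[OF psd(1) posdef_mult_matrix_inv, of w x]
      psd_cquad_inverse_ge[OF psd(2) posdef_mult_matrix_inv, of w x]
    by (intro add_mono mult_left_mono) auto
  finally show "Re (cquad (matrix_inv Z) x) \<le> (1 - t) * Re (cquad (matrix_inv X) x) + t * Re (cquad (matrix_inv Y) x)" .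
qed (rule convex_posdef)

lemma convex_on_finite_sum:
  assumes "finite I" "convex S" "\<And>i. i \<in> I \<Longrightarrow> convex_on S (f i)"
  shows "convex_on S (\<lambda>x. \<Sum>i\<in>I. f i x)"
  using assms by (induction I rule: finite_induct) (auto simp: convex_on_const)

lemma convex_on_trace_matrix_inv:
  fixes Q :: "complex^'n^'n"
  assumes "psd Q"
  shows "convex_on {A. posdef A} (\<lambda>X. Re (trace (Q ** matrix_inv X)))"
proof -
  obtain U q where U: "unitary U" and q: "\<forall>i. q i \<ge> 0" and Q: "Q = U ** cdiag q ** cadj U"
    using psd_spectral[OF assms] by blast
  have "Re (trace (Q ** N)) = (\<Sum>j\<in>UNIV. q j * Re (cquad N (column j U)))" for N
    by (simp add: Q trace_mul_sym[of _ N] Re_trace_mult_spectral_form)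
  moreover have "convex_on {A. posdef A} (\<lambda>X. \<Sum>j\<in>UNIV. q j * Re (cquad (matrix_inv X) (column j U)))"
    using q by (intro convex_on_finite_sum convex_posdef convex_on_cmul convex_on_cquad_matrix_inv) auto
  ultimately show ?thesis
    by simp
qed

section \<open>Concavity of the trace of the matrix logarithm\<close>

text \<open>\<open>log_integrand Q A s = tr (Q ((1 + s)\<^sup>-\<^sup>1 I - (A + s I)\<^sup>-\<^sup>1))\<close> is the integrand of
  \<open>tr (Q log A) = \<integral>\<^sub>0\<^sup>\<infinity> log_integrand Q A s ds\<close>, the matrix form of
  \<open>ln a = \<integral>\<^sub>0\<^sup>\<infinity> (1 / (1 + s) - 1 / (a + s)) ds\<close>.\<close>
definition log_integrand :: "complex^'n^'n \<Rightarrow> complex^'n^'n \<Rightarrow> real \<Rightarrow> real" where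
  "log_integrand Q A s =
     Re (trace Q) / (1 + s) - Re (trace (Q ** matrix_inv (A + mat (complex_of_real s))))"

lemma has_integral_ln_difference:
  fixes a t :: real
  assumes "a > 0" "t \<ge> 0"
  shows "((\<lambda>s. 1 / (1 + s) - 1 / (a + s)) has_integral (ln (1 + t) - ln (a + t) + ln a)) {0..t}"
proof -
  have "((\<lambda>s. ln (1 + s) - ln (a + s)) has_real_derivative (1 / (1 + s) - 1 / (a + s)))
      (at s within {0..t})" if "s \<in> {0..t}" for s
    using that assms by (auto intro!: derivative_eq_intros)
  then have "((\<lambda>s. 1 / (1 + s) - 1 / (a + s)) has_integral
      ((ln (1 + t) - ln (a + t)) - (ln (1 + 0) - ln (a + 0)))) {0..t}"
    using assms(2) by (intro fundamental_theorem_of_calculus)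
      (auto simp: has_real_derivative_iff_has_vector_derivative)
  then show ?thesis by simp
qed

lemma ln_shift_difference_tendsto_0: "a > 0 \<Longrightarrow> (\<lambda>n::nat. ln (1 + real n) - ln (a + real n)) \<longlonglongrightarrow> 0"
  by real_asymp

lemma log_integrand_spectral_form:
  fixes Q V :: "complex^'n^'n"
  assumes V: "unitary V" and e: "\<forall>j. e j > 0" and s: "s \<ge> 0"
  shows "log_integrand Q (V ** cdiag e ** cadj V) s
       = (\<Sum>j\<in>UNIV. Re (cquad Q (column j V)) * (1 / (1 + s) - 1 / (e j + s)))"
proof -
  have "Re (trace Q) = (\<Sum>j\<in>UNIV. Re (cquad Q (column j V)))"
    using Re_trace_mult_spectral_form[of Q V "\<lambda>j. 1"] unitary_mult_cadj[OF V]
    by (simp add: cdiag_const)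
  moreover have "\<forall>j. e j + s \<noteq> 0"
    using e s by (metis add_pos_nonneg less_irrefl)
  then have "Re (trace (Q ** matrix_inv (V ** cdiag e ** cadj V + mat (complex_of_real s))))
      = (\<Sum>j\<in>UNIV. Re (cquad Q (column j V)) / (e j + s))"
    by (simp add: spectral_form_add_mat[OF V] matrix_inv_spectral_form[OF V]
        Re_trace_mult_spectral_form)
  ultimately show ?thesis
    by (simp add: log_integrand_def right_diff_distrib sum_subtractf sum_divide_distrib)
qed

lemma has_integral_log_integrand:
  fixes Q A :: "complex^'n^'n"
  assumes "posdef A"
  shows "\<exists>I. (\<forall>n. (log_integrand Q A has_integral I n) {0..real n}) \<and>
             I \<longlonglongrightarrow> Re (trace (Q ** mlog A))"
proof -
  obtain V e where V: "unitary V" and e: "\<forall>j. e j > 0" and A: "A = V ** cdiag e ** cadj V"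
    and L: "mlog A = V ** cdiag (\<lambda>j. ln (e j)) ** cadj V"
    using mlog_posdef[OF assms] by blast
  define w where "w j = Re (cquad Q (column j V))" for j
  define I where "I n = (\<Sum>j\<in>UNIV. w j * (ln (1 + real n) - ln (e j + real n) + ln (e j)))" for n :: nat
  have "(log_integrand Q A has_integral I n) {0..real n}" for n
  proof (rule has_integral_eq)
    show "((\<lambda>s. \<Sum>j\<in>UNIV. w j * (1 / (1 + s) - 1 / (e j + s))) has_integral I n) {0..real n}"
      unfolding I_def using e
      by (intro has_integral_sum has_integral_mult_right has_integral_ln_difference) auto
    show "(\<Sum>j\<in>UNIV. w j * (1 / (1 + s) - 1 / (e j + s))) = log_integrand Q A s"
      if "s \<in> {0..real n}" for s
      using that by (simp add: A w_def log_integrand_spectral_form[OF V e])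
  qed
  moreover have "I \<longlonglongrightarrow> (\<Sum>j\<in>UNIV. w j * (0 + ln (e j)))"
    unfolding I_def using e by (intro tendsto_intros ln_shift_difference_tendsto_0) auto
  then have "I \<longlonglongrightarrow> Re (trace (Q ** mlog A))"
    by (simp add: L w_def Re_trace_mult_spectral_form mult.commute)
  ultimately show ?thesis
    by blast
qed

lemma concave_on_trace_mlog:
  fixes Q :: "complex^'n^'n"
  assumes Q: "psd Q"
  shows "concave_on {A. posdef A} (\<lambda>X. Re (trace (Q ** mlog X)))"
  unfolding concave_on_iff
proof (intro conjI convex_posdef ballI allI impI)
  fix X Y :: "complex^'n^'n" and u v :: real
  assume XY: "X \<in> {A. posdef A}" "Y \<in> {A. posdef A}" and uv: "0 \<le> u" "0 \<le> v" "u + v = 1"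
  define Z where "Z = u *\<^sub>R X + v *\<^sub>R Y"
  have X: "posdef X" and Y: "posdef Y" and Z: "posdef Z"
    using XY uv posdef_convex_combination by (auto simp: Z_def)
  obtain IX where IX: "\<And>n. (log_integrand Q X has_integral IX n) {0..real n}"
      "IX \<longlonglongrightarrow> Re (trace (Q ** mlog X))"
    using has_integral_log_integrand[OF X] by blast
  obtain IY where IY: "\<And>n. (log_integrand Q Y has_integral IY n) {0..real n}"
      "IY \<longlonglongrightarrow> Re (trace (Q ** mlog Y))"
    using has_integral_log_integrand[OF Y] by blast
  obtain IZ where IZ: "\<And>n. (log_integrand Q Z has_integral IZ n) {0..real n}"
      "IZ \<longlonglongrightarrow> Re (trace (Q ** mlog Z))"
    using has_integral_log_integrand[OF Z] by blast
  have "u * log_integrand Q X s + v * log_integrand Q Y s \<le> log_integrand Q Z s" if "s \<ge> 0" for s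
  proof -
    define S :: "complex^'n^'n" where "S = mat (complex_of_real s)"
    have "u *\<^sub>R (X + S) + v *\<^sub>R (Y + S) = Z + (u + v) *\<^sub>R S"
      by (simp add: Z_def scaleR_add_right scaleR_add_left algebra_simps)
    then have "Z + S = u *\<^sub>R (X + S) + v *\<^sub>R (Y + S)"
      using uv by simp
    moreover have "X + S \<in> {A. posdef A}" "Y + S \<in> {A. posdef A}"
      using X Y that by (simp_all add: S_def posdef_add_mat)
    ultimately have "Re (trace (Q ** matrix_inv (Z + S)))
        \<le> u * Re (trace (Q ** matrix_inv (X + S))) + v * Re (trace (Q ** matrix_inv (Y + S)))"
      using convex_on_trace_matrix_inv[OF Q] uv unfolding convex_on_def by simp
    moreover have "u * log_integrand Q X s + v * log_integrand Q Y s
        = (u + v) * (Re (trace Q) / (1 + s))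
          - (u * Re (trace (Q ** matrix_inv (X + S))) + v * Re (trace (Q ** matrix_inv (Y + S))))"
      by (simp add: log_integrand_def S_def algebra_simps add_divide_distrib)
    ultimately show ?thesis
      using uv by (simp add: log_integrand_def S_def)
  qed
  then have "u * IX n + v * IY n \<le> IZ n" for n
    by (rule has_integral_le[OF has_integral_add[OF has_integral_mult_right[OF IX(1)]
          has_integral_mult_right[OF IY(1)]] IZ(1)]) auto
  moreover have "(\<lambda>n. u * IX n + v * IY n)
      \<longlonglongrightarrow> u * Re (trace (Q ** mlog X)) + v * Re (trace (Q ** mlog Y))"
    by (intro tendsto_intros IX(2) IY(2))
  ultimately show "u * Re (trace (Q ** mlog X)) + v * Re (trace (Q ** mlog Y))
      \<le> Re (trace (Q ** mlog (u *\<^sub>R X + v *\<^sub>R Y)))"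
    using LIMSEQ_le[OF _ IZ(2)] unfolding Z_def by blast
qed

section \<open>Relative smoothness and strong convexity of the relative entropy\<close>

lemma convex_on_eq:
  assumes "convex_on S g" "\<And>x. x \<in> S \<Longrightarrow> f x = g x"
  shows "convex_on S f"
  using assms unfolding convex_on_def convex_def by simp

lemma convex_on_density_pd_const_minus_trace_mlog:
  fixes Q :: "complex^'n^'n"
  assumes "psd Q"
  shows "convex_on density_pd (\<lambda>X. c - Re (trace (Q ** mlog X)))"
proof (rule convex_on_diff)
  show "convex_on density_pd (\<lambda>X. c)"
    by (simp add: convex_on_const convex_density_pd)
  show "concave_on density_pd (\<lambda>X. Re (trace (Q ** mlog X)))"
  proof -
    have "density_pd \<subseteq> {A. posdef A}"
      by (auto simp: density_pd_def)
    with concave_on_trace_mlog[OF assms] show ?thesis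
      unfolding concave_on_def by (rule convex_on_subset[OF _ _ convex_density_pd])
  qed
qed

lemma qrel_entropy_minus_neg_logdet:
  assumes "posdef X"
  shows "qrel_entropy \<rho> X - c * neg_logdet X
       = Re (trace (\<rho> ** mlog \<rho>)) - Re (trace ((\<rho> - mat (complex_of_real c)) ** mlog X))"
  by (simp add: qrel_entropy_def neg_logdet_posdef[OF assms] matrix_diff_ldistrib
      matrix_diff_rdistrib trace_sub trace_mat_mult)

lemma neg_logdet_minus_qrel_entropy:
  assumes "posdef X"
  shows "c * neg_logdet X - qrel_entropy \<rho> X
       = - Re (trace (\<rho> ** mlog \<rho>)) - Re (trace ((mat (complex_of_real c) - \<rho>) ** mlog X))"
  by (simp add: qrel_entropy_def neg_logdet_posdef[OF assms] matrix_diff_ldistrib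
      matrix_diff_rdistrib trace_sub trace_mat_mult)

theorem mainTheorem10:
  fixes \<rho> :: "complex^'n^'n"
  assumes "density \<rho>"
  shows "rel_smooth density_pd (lambda_max \<rho>) (qrel_entropy \<rho>) neg_logdet
       \<and> rel_strongly_convex density_pd (lambda_min \<rho>) (qrel_entropy \<rho>) neg_logdet"
proof -
  define K where "K = Re (trace (\<rho> ** mlog \<rho>))"
  have herm: "hermitian \<rho>"
    using assms by (simp add: density_def psd_def)
  have fin: "finite (real_eigenvalues \<rho>)"
    by (rule finite_real_eigenvalues[OF herm])
  have psd_max: "psd (mat (complex_of_real (lambda_max \<rho>)) - \<rho>)"
  proof (intro psd_if_real_eigenvalues_nonneg hermitian_mat_diff herm ballI)
    fix r assume "r \<in> real_eigenvalues (mat (complex_of_real (lambda_max \<rho>)) - \<rho>)"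
    then have "lambda_max \<rho> - r \<le> lambda_max \<rho>"
      unfolding real_eigenvalues_mat_diff lambda_max_def using fin by (rule Max_ge[rotated])
    then show "r \<ge> 0" by simp
  qed
  have psd_min: "psd (\<rho> - mat (complex_of_real (lambda_min \<rho>)))"
  proof (intro psd_if_real_eigenvalues_nonneg hermitian_diff_mat herm ballI)
    fix r assume "r \<in> real_eigenvalues (\<rho> - mat (complex_of_real (lambda_min \<rho>)))"
    then have "lambda_min \<rho> \<le> r + lambda_min \<rho>"
      unfolding real_eigenvalues_diff_mat lambda_min_def using fin by (rule Min_le[rotated])
    then show "r \<ge> 0" by simp
  qed
  note smooth = convex_on_density_pd_const_minus_trace_mlog[OF psd_max, of "- K"]
  note strong = convex_on_density_pd_const_minus_trace_mlog[OF psd_min, of K]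
  show ?thesis
    unfolding rel_smooth_def rel_strongly_convex_def
  proof
    show "convex_on density_pd (\<lambda>X. lambda_max \<rho> * neg_logdet X - qrel_entropy \<rho> X)"
      by (rule convex_on_eq[OF smooth]) (simp add: K_def density_pd_def neg_logdet_minus_qrel_entropy)
    show "convex_on density_pd (\<lambda>X. qrel_entropy \<rho> X - lambda_min \<rho> * neg_logdet X)"
      by (rule convex_on_eq[OF strong]) (simp add: K_def density_pd_def qrel_entropy_minus_neg_logdet)
  qed
qed

end
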